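(* For two-component mixture models, if a one-cluster region is stable for EM, then it is stable for GD.
   Context: Setting: a two-component mixture model $p(\mathbf x\mid\theta)=\pi_1 f(\mathbf x\mid\boldsymbol\mu_1)+\pi_2 f(\mathbf x\mid\boldsymbol\mu_2)$, with $\pi_1+\pi_2=1$, fitted to a data distribution $p^*$ in the infinite-sample setting. Population EM: - Set $\tilde q_c(\mathbf x)=p^*(\mathbf x)f(\mathbf x\mid\boldsymbol\mu_c)/p(\mathbf x\mid\theta)$ and $Z_c=\int\tilde q_c$. - EM updates $\pi_c\leftarrow\pi_cZ_c$ and $\boldsymbol\mu_c\leftarrow$ the parameter fitted to the normalized distribution $\tilde q_c/Z_c$; for Gaussian or Bernoulli components this is its mean. GD: - GD is projected gradient ascent on $L(\theta)=\mathbb E_{p^*}[\log p(\mathbf x\mid\theta)]$ with small step size $\alpha$, where the mixing coefficients are Euclidean-projected onto the simplex after each step. - Note $\partial L/\partial\pi_c=Z_c$, and the gradient with respect to $\boldsymbol\mu_c$ is proportional to $\pi_c$. One-cluster regime: - A one-cluster region is a set of parameters with $\pi_1$ near $0$. - To leading order in $\pi_1$: $Z_2=1$, $Z_1=\int p^*(\mathbf x)f(\mathbf x\mid\boldsymbol\mu_1)/f(\mathbf x\mid\boldsymbol\mu_2)\,d\mathbf x$, and $\boldsymbol\mu_2$ is driven to $\overline{\mathbf x}=\mathbb E_{p^*}[\mathbf x]$. - Hence GD updates the mixing weights as $(\pi_1+\tfrac{\alpha}{2}(Z_1-1),\pi_2-\tfrac{\alpha}{2}(Z_1-1))$. A one-cluster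 region is stable (traps) for an algorithm if the algorithm initialized there does not escape it, i.e. $\pi_1$ does not grow away from $0$. *)

theory Defs
  imports "HOL-Probability.Probability"
begin

text \<open>Two-component mixture p(x|theta) = pi1 f(x|mu1) + pi2 f(x|mu2), fitted to the
  data distribution p* (a probability measure M on the data space 'x) in the
  infinite-sample (population) setting.  f x mu is the component density of x at
  parameter mu (mean parameter, same space as the data).  In the one-cluster regime
  (pi1 near 0) we use the leading-order quantities given in the paper:
  mu2 = xbar = E_{p*}[x], Z2 = 1, Z1 = int p*(x) f(x|mu1)/f(x|mu2) dx.\<close>

definition xbar :: "'x::euclidean_space measure \<Rightarrow> 'x" where
  "xbar M = (\<integral>x. x \<partial>M)"

definition Z1 :: "'x::euclidean_space measure \<Rightarrow> ('x \<Rightarrow> 'x \<Rightarrow> real) \<Rightarrow> 'x \<Rightarrow> real" where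
  "Z1 M f mu1 = (\<integral>x. f x mu1 / f x (xbar M) \<partial>M)"

text \<open>EM M-step for mu1: the mean of the normalized distribution q1/Z1
  (the fitted parameter for Gaussian or Bernoulli components).\<close>
definition em_mu :: "'x::euclidean_space measure \<Rightarrow> ('x \<Rightarrow> 'x \<Rightarrow> real) \<Rightarrow> 'x \<Rightarrow> 'x" where
  "em_mu M f mu1 = (1 / Z1 M f mu1) *\<^sub>R (\<integral>x. (f x mu1 / f x (xbar M)) *\<^sub>R x \<partial>M)"

primrec em_traj :: "'x::euclidean_space measure \<Rightarrow> ('x \<Rightarrow> 'x \<Rightarrow> real) \<Rightarrow> real \<times> 'x \<Rightarrow> nat \<Rightarrow> real \<times> 'x" where
  "em_traj M f s 0 = s"
| "em_traj M f s (Suc t) =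
     (let (p, mu) = em_traj M f s t in (p * Z1 M f mu, em_mu M f mu))"

text \<open>Euclidean projection of (a,b) in R^2 onto the simplex {(p1,p2). p1,p2 >= 0, p1+p2 = 1}.\<close>
definition proj_simplex2 :: "real \<times> real \<Rightarrow> real \<times> real" where
  "proj_simplex2 ab = (let p1 = max 0 (min 1 ((fst ab - snd ab + 1) / 2)) in (p1, 1 - p1))"

text \<open>Leading-order projected GD trajectory with step size alpha: the mixing weights move
  as (pi1 + alpha/2 (Z1-1), pi2 - alpha/2 (Z1-1)) followed by projection onto the simplex;
  the gradient in mu1 is proportional to pi1, hence vanishes to leading order, so mu1 stays.\<close>
primrec gd_traj :: "'x::euclidean_space measure \<Rightarrow> ('x \<Rightarrow> 'x \<Rightarrow> real) \<Rightarrow> real \<Rightarrow> real \<times> 'x \<Rightarrow> nat \<Rightarrow> real \<times> 'x" where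
  "gd_traj M f \<alpha> s 0 = s"
| "gd_traj M f \<alpha> s (Suc t) =
     (let (p, mu) = gd_traj M f \<alpha> s t;
          d = \<alpha> / 2 * (Z1 M f mu - 1)
      in (fst (proj_simplex2 (p + d, (1 - p) - d)), mu))"

definition one_cluster_region :: "real \<Rightarrow> (real \<times> 'x) set \<Rightarrow> bool" where
  "one_cluster_region \<delta> S \<longleftrightarrow> 0 < \<delta> \<and> \<delta> \<le> 1 \<and> S \<subseteq> {0<..<\<delta>} \<times> UNIV"

definition stable_EM :: "'x::euclidean_space measure \<Rightarrow> ('x \<Rightarrow> 'x \<Rightarrow> real) \<Rightarrow> (real \<times> 'x) set \<Rightarrow> bool" where
  "stable_EM M f S \<longleftrightarrow> (\<forall>s\<in>S. \<forall>t. fst (em_traj M f s t) \<le> fst s)"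

definition stable_GD :: "'x::euclidean_space measure \<Rightarrow> ('x \<Rightarrow> 'x \<Rightarrow> real) \<Rightarrow> real \<Rightarrow> (real \<times> 'x) set \<Rightarrow> bool" where
  "stable_GD M f \<alpha> S \<longleftrightarrow> (\<forall>s\<in>S. \<forall>t. fst (gd_traj M f \<alpha> s t) \<le> fst s)"

end

theory Submission
  imports Defs
begin

(* To leading order EM multiplies pi1 by Z1(mu1), so stability for EM already after one
   step forces Z1(mu1) <= 1 at every starting point. GD leaves mu1 fixed and moves pi1 by
   alpha/2 (Z1(mu1) - 1) <= 0 before projecting onto the simplex, and the projection of such
   a step never exceeds the old weight; hence pi1 is nonincreasing along GD as well. *)

lemma fst_proj_simplex2_step:
  "fst (proj_simplex2 (p + d, (1 - p) - d)) = max 0 (min 1 (p + d))"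
  unfolding proj_simplex2_def Let_def by (simp add: add_divide_distrib)

lemma snd_gd_traj [simp]: "snd (gd_traj M f \<alpha> s t) = snd s"
  by (induction t) (simp_all add: case_prod_beta Let_def)

lemma fst_gd_traj_Suc:
  "fst (gd_traj M f \<alpha> s (Suc t)) =
     max 0 (min 1 (fst (gd_traj M f \<alpha> s t) + \<alpha> / 2 * (Z1 M f (snd s) - 1)))"
  by (simp add: case_prod_beta Let_def fst_proj_simplex2_step)

lemma fst_gd_traj_le_if_Z1_le_one:
  assumes "Z1 M f (snd s) \<le> 1" and "0 \<le> \<alpha>" and "0 \<le> fst s"
  shows "fst (gd_traj M f \<alpha> s t) \<le> fst s"
proof (induction t)
  case 0
  show ?case by simp
next
  case (Suc t)
  have "\<alpha> / 2 * (Z1 M f (snd s) - 1) \<le> 0"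
    using assms(1,2) by (simp add: mult_nonneg_nonpos)
  with Suc.IH assms(3) show ?case
    unfolding fst_gd_traj_Suc by simp
qed

lemma Z1_le_one_if_stable_EM:
  assumes "stable_EM M f S" and "s \<in> S" and "0 < fst s"
  shows "Z1 M f (snd s) \<le> 1"
proof -
  have "fst (em_traj M f s 1) \<le> fst s"
    using assms(1,2) unfolding stable_EM_def by blast
  then have "fst s * Z1 M f (snd s) \<le> fst s * 1"
    by (simp add: case_prod_beta)
  with assms(3) show ?thesis
    by simp
qed

theorem mainTheorem3:
  fixes M :: "'x::euclidean_space measure"
    and f :: "'x \<Rightarrow> 'x \<Rightarrow> real"
    and \<alpha> \<delta> :: real
    and S :: "(real \<times> 'x) set"
  assumes "prob_space M"
    and "sets M = sets borel"
    and "0 < \<alpha>"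
    and "one_cluster_region \<delta> S"
    and "stable_EM M f S"
  shows "stable_GD M f \<alpha> S"
  unfolding stable_GD_def
proof (intro ballI allI)
  fix s t
  assume "s \<in> S"
  moreover have "0 < fst s"
    using assms(4) \<open>s \<in> S\<close> unfolding one_cluster_region_def by auto
  ultimately have "Z1 M f (snd s) \<le> 1"
    using assms(5) by (rule Z1_le_one_if_stable_EM[rotated])
  then show "fst (gd_traj M f \<alpha> s t) \<le> fst s"
    using assms(3) \<open>0 < fst s\<close> by (intro fst_gd_traj_le_if_Z1_le_one) simp_all
qed

end
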